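(* Let $\delta\ge 0$ be a real number and let $g,u,c:\mathbb{R}\to[0,\infty)$ be continuous functions. Let $\{\varepsilon_t\}_t$ be an i.i.d. sequence with mean $0$ and variance $1$, let $\{x_t\}_t$ be a strictly stationary ergodic process independent of $\{\varepsilon_t\}_t$, with $\{(\varepsilon_t,x_t)\}_t$ adapted to a filtration $\{\mathcal{F}_t\}_t$. Suppose that for some $\alpha\in(0,1]$, $E|\varepsilon_t|^{\delta\alpha}<\infty$, $E(u(x_t))^{\alpha}<\infty$, $E(c(\varepsilon_t))^{\alpha}<1$, $E(g(\varepsilon_t))^{\alpha}<\infty$. Let $\{(R_t,\sigma_t)\}_t$ be the stationary ergodic solution of $$R_t=\sigma_t\varepsilon_t,\qquad \sigma_t^{\delta}=g(\varepsilon_{t-1})+u(x_{t-1})+\sum_{k=1}^{\infty}\Big(\prod_{j=0}^{k-1}c(\varepsilon_{t-1-j})\Big)\big[g(\varepsilon_{t-1-k})+u(x_{t-1-k})\big],$$ and let $\{(\tilde R_t,\tilde\sigma_t)\}_{t\ge0}$ be the process started at time $0$ defined by $$\tilde R_t=\tilde\sigma_t\varepsilon_t,\qquad \tilde\sigma_t^{\delta}=g(\varepsilon_{t-1})+u(x_{t-1})+c(\varepsilon_{t-1})\tilde\sigma_{t-1}^{\delta}\ (t\ge1),$$ where $\tilde\sigma_0$ is independent of $\{\varepsilon_t\}_t$ and $E|\tilde\sigma_0|^{\delta\alpha}<\infty$. Then $$\tilde R_t=\tilde\sigma_t\varepsilon_t,\qquad \tilde\sigma_t^{\delta}=\sigma_t^{\delta}+\xi_t,$$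 where $E|\xi_t|^{\alpha}=\mathcal{O}(\rho^t)$ for some $0<\rho<1$. Similarly, $\tilde R_t^{\delta}=R_t^{\delta}+\psi_t$ with $E|\psi_t|^{\alpha}=\mathcal{O}(\rho^t)$ with the same $\rho$, where $R_t^{\delta}=\sigma_t^{\delta}\varepsilon_t^{\delta}$.
   Context: The functions $g,u,c$ are assumed chosen so that $P(\sigma_t>0)=1$ for every $t$. *)

theory Defs
  imports "HOL-Probability.Probability" "HOL-Library.Landau_Symbols"
begin

definition stationary_proc :: "'a measure \<Rightarrow> (int \<Rightarrow> 'a \<Rightarrow> real) \<Rightarrow> bool" where
  "stationary_proc M X \<longleftrightarrow>
     (\<forall>s::int. distr M (PiM UNIV (\<lambda>_. borel)) (\<lambda>\<omega> t. X (t + s) \<omega>)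
             = distr M (PiM UNIV (\<lambda>_. borel)) (\<lambda>\<omega> t. X t \<omega>))"

definition ergodic_proc :: "'a measure \<Rightarrow> (int \<Rightarrow> 'a \<Rightarrow> real) \<Rightarrow> bool" where
  "ergodic_proc M X \<longleftrightarrow>
     (\<forall>A \<in> sets (PiM (UNIV::int set) (\<lambda>_. (borel :: real measure))).
        {f. (\<lambda>t. f (t + 1)) \<in> A} = A \<longrightarrow>
        measure M {\<omega> \<in> space M. (\<lambda>t. X t \<omega>) \<in> A} = 0 \<or>
        measure M {\<omega> \<in> space M. (\<lambda>t. X t \<omega>) \<in> A} = 1)"

end

theory Submission
  imports Defs
begin

text \<open>Write \<open>\<sigma>t\<close> for the process started at time 0 and \<open>\<xi> t = \<sigma>t t ^ \<delta> - \<sigma> t ^ \<delta>\<close>.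
  Subtracting the two recursions gives \<open>\<xi> (t + 1) = c (\<epsilon> t) * \<xi> t\<close>, hence
  \<open>\<xi> t = (\<Prod>j<t. c (\<epsilon> j)) * \<xi> 0\<close>. Since \<open>0 < \<alpha> \<le> 1\<close>, the map \<open>y \<mapsto> y powr \<alpha>\<close> is subadditive,
  so \<open>\<bar>\<xi> t\<bar> powr \<alpha>\<close> is at most \<open>(\<Prod>j<t. c (\<epsilon> j) powr \<alpha>)\<close> times
  \<open>\<sigma>t 0 powr (\<delta> \<alpha>) + \<sigma> 0 powr (\<delta> \<alpha>)\<close>, and \<open>\<sigma> 0 powr (\<delta> \<alpha>)\<close> is dominated term by term by
  the \<open>\<alpha>\<close>-th powers of the terms of its series representation. The noise is independent of \<open>x\<close>
  and of \<open>\<sigma>t 0\<close>, so the expectation of each term factorises, every factor \<open>c (\<epsilon> j) powr \<alpha>\<close>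
  contributing \<open>\<gamma> = E (c (\<epsilon> 0) powr \<alpha>) < 1\<close>; summing the geometric series gives
  \<open>E (\<bar>\<xi> t\<bar> powr \<alpha>) \<le> K \<gamma> ^ t\<close>. For the returns, \<open>\<psi> t = \<bar>\<epsilon> t\<bar> powr \<delta> * \<xi> t\<close>, and the extra
  factor depends on \<open>\<epsilon> t\<close> alone, which appears nowhere else in the bound.\<close>

lemma powr_add_le_add_powr:
  fixes x y a :: real
  assumes "0 \<le> x" "0 \<le> y" "0 < a" "a \<le> 1"
  shows "(x + y) powr a \<le> x powr a + y powr a"
proof (cases "x + y = 0")
  case True
  then show ?thesis using assms by simp
next
  case False
  define s where "s = x + y"
  have s: "s > 0" using False assms unfolding s_def by simp
  have "x / s \<le> (x / s) powr a" "y / s \<le> (y / s) powr a"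
    using powr_mono'[of a 1 "x / s"] powr_mono'[of a 1 "y / s"] assms s
    by (simp_all add: s_def divide_le_eq_1)
  moreover have "x / s + y / s = 1" using s by (simp add: s_def add_divide_distrib[symmetric])
  ultimately have "1 \<le> (x powr a + y powr a) / s powr a"
    using assms s by (simp add: powr_divide add_divide_distrib)
  then show ?thesis using s unfolding s_def[symmetric] by (simp add: le_divide_eq)
qed

lemma abs_mult_diff_powr_le:
  fixes p a b r :: real
  assumes "0 \<le> p" "0 \<le> a" "0 \<le> b" "0 < r" "r \<le> 1"
  shows "\<bar>p * (a - b)\<bar> powr r \<le> p powr r * (a powr r + b powr r)"
proof -
  have "\<bar>a - b\<bar> powr r \<le> (a + b) powr r"
    using assms by (intro powr_mono2) auto
  also have "\<dots> \<le> a powr r + b powr r"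
    using assms by (intro powr_add_le_add_powr)
  finally show ?thesis
    using assms by (simp add: abs_mult powr_mult mult_left_mono)
qed

lemma powr_sum_le_sum_powr:
  fixes b :: "nat \<Rightarrow> real"
  assumes "\<And>k. 0 \<le> b k" "0 < a" "a \<le> 1"
  shows "(\<Sum>k<n. b k) powr a \<le> (\<Sum>k<n. b k powr a)"
proof (induction n)
  case (Suc n)
  have "(\<Sum>k<Suc n. b k) powr a \<le> (\<Sum>k<n. b k) powr a + b n powr a"
    using powr_add_le_add_powr[of "\<Sum>k<n. b k" "b n" a] assms by (simp add: sum_nonneg)
  then show ?case using Suc by simp
qed simp

lemma ennreal_powr_le_suminf_powr:
  fixes b :: "nat \<Rightarrow> real"
  assumes b: "\<And>k. 0 \<le> b k" and a: "0 < a" "a \<le> 1" and S: "b sums S"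
  shows "ennreal (S powr a) \<le> (\<Sum>k. ennreal (b k powr a))"
proof -
  have "(\<lambda>n. ennreal ((\<Sum>k<n. b k) powr a)) \<longlonglongrightarrow> ennreal (S powr a)"
    using S a b unfolding sums_def by (intro tendsto_ennrealI tendsto_powr2) (auto simp: sum_nonneg)
  then show ?thesis
  proof (rule LIMSEQ_le_const2, intro exI allI impI)
    fix n :: nat
    have "ennreal ((\<Sum>k<n. b k) powr a) \<le> ennreal (\<Sum>k<n. b k powr a)"
      by (intro ennreal_leI powr_sum_le_sum_powr b a)
    also have "\<dots> = (\<Sum>k<n. ennreal (b k powr a))" by (simp add: sum_ennreal)
    also have "\<dots> \<le> (\<Sum>k. ennreal (b k powr a))" by (rule sum_le_suminf) auto
    finally show "ennreal ((\<Sum>k<n. b k) powr a) \<le> (\<Sum>k. ennreal (b k powr a))" .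
  qed
qed

text \<open>From its second term on, the series for \<open>s t\<close> is \<open>a (t - 1)\<close> times the series for \<open>s (t - 1)\<close>.\<close>
lemma backward_series_recursion:
  fixes a w s :: "int \<Rightarrow> real"
  assumes S: "\<And>t. (\<lambda>k. (\<Prod>j<Suc k. a (t - 1 - int j)) * w (t - 1 - int (Suc k))) sums (s t - w (t - 1))"
  shows "s t = w (t - 1) + a (t - 1) * s (t - 1)"
proof -
  define A where "A k = (\<Prod>j<Suc k. a (t - 1 - int j)) * w (t - 1 - int (Suc k))" for k
  define B where "B k = (\<Prod>j<Suc k. a (t - 1 - 1 - int j)) * w (t - 1 - 1 - int (Suc k))" for k
  have AB: "A (Suc k) = a (t - 1) * B k" for k
  proof -
    have "(\<Prod>j<Suc (Suc k). a (t - 1 - int j)) = a (t - 1) * (\<Prod>j<Suc k. a (t - 1 - int (Suc j)))"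
      by (subst prod.lessThan_Suc_shift) simp
    also have "(\<Prod>j<Suc k. a (t - 1 - int (Suc j))) = (\<Prod>j<Suc k. a (t - 1 - 1 - int j))"
      by (intro prod.cong refl) (simp add: algebra_simps)
    finally show ?thesis unfolding A_def B_def by (simp add: mult.assoc)
  qed
  have "A sums (s t - w (t - 1))"
    using S[of t] unfolding A_def .
  then have "(\<lambda>k. A (Suc k)) sums (s t - w (t - 1) - A 0)"
    by (simp add: sums_Suc_iff)
  moreover have "B sums (s (t - 1) - w (t - 1 - 1))"
    using S[of "t - 1"] unfolding B_def .
  then have "(\<lambda>k. A (Suc k)) sums (a (t - 1) * (s (t - 1) - w (t - 1 - 1)))"
    unfolding AB by (rule sums_mult)
  ultimately have "s t - w (t - 1) - A 0 = a (t - 1) * (s (t - 1) - w (t - 1 - 1))"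
    by (rule sums_unique2)
  then show ?thesis by (simp add: A_def algebra_simps)
qed

lemma linear_recurrence_eq_prod:
  fixes \<xi> :: "nat \<Rightarrow> real" and f :: "int \<Rightarrow> real"
  assumes "\<And>n. \<xi> (Suc n) = f (int n) * \<xi> n"
  shows "\<xi> n = (\<Prod>j\<in>{0..<int n}. f j) * \<xi> 0"
proof (induction n)
  case (Suc n)
  have "{0..<int (Suc n)} = insert (int n) {0..<int n}" by auto
  then show ?case using Suc assms by simp
qed simp

lemma prod_lessThan_reflect_int:
  "(\<Prod>j<k. f (-1 - int j)) = (\<Prod>j\<in>{-int k..<0}. f j :: 'b :: comm_monoid_mult)"
proof (induction k)
  case (Suc k)
  have "{-int (Suc k)..<0} = insert (-1 - int k) {-int k..<0}" by auto
  then show ?case using Suc by (simp add: mult.commute)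
qed simp

lemma bigo_power_if_le_mult_power:
  fixes E :: "nat \<Rightarrow> real"
  assumes "\<And>t. 0 \<le> E t" "\<And>t. E t \<le> C * \<gamma> ^ t" "0 \<le> \<gamma>" "\<gamma> \<le> \<rho>"
  shows "E \<in> O(\<lambda>t. \<rho> ^ t)"
proof (rule bigoI[where c = C], rule always_eventually, rule allI)
  fix t
  have "0 \<le> C" using assms(1)[of 0] assms(2)[of 0] by simp
  then have "E t \<le> C * \<rho> ^ t"
    using assms by (meson order.trans mult_left_mono power_mono)
  then show "norm (E t) \<le> C * norm (\<rho> ^ t)" using assms by simp
qed

lemma integrable_integral_le_if_nn_integral_le:
  fixes f :: "'a \<Rightarrow> real"
  assumes f: "f \<in> borel_measurable M" "\<And>\<omega>. 0 \<le> f \<omega>" and B: "0 \<le> B"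
    and le: "(\<integral>\<^sup>+\<omega>. ennreal (f \<omega>) \<partial>M) \<le> ennreal B"
  shows "integrable M f" "integral\<^sup>L M f \<le> B"
proof -
  show "integrable M f"
    by (rule integrableI_nonneg) (use f le in \<open>auto intro: le_less_trans\<close>)
  have "integral\<^sup>L M f = enn2real (\<integral>\<^sup>+\<omega>. ennreal (f \<omega>) \<partial>M)"
    using f by (intro integral_eq_nn_integral) auto
  also have "\<dots> \<le> B" using enn2real_mono[OF le] B by simp
  finally show "integral\<^sup>L M f \<le> B" .
qed

lemma (in prob_space) indep_var_nn_integral_mult:
  assumes ind: "indep_var S X T Y"
    and f: "f \<in> borel_measurable S" and h: "h \<in> borel_measurable T"
  shows "(\<integral>\<^sup>+\<omega>. f (X \<omega>) * h (Y \<omega>) \<partial>M) = (\<integral>\<^sup>+\<omega>. f (X \<omega>) \<partial>M) * (\<integral>\<^sup>+\<omega>. h (Y \<omega>) \<partial>M)"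
proof -
  have rv: "random_variable S X" "random_variable T Y"
   and eq: "distr M S X \<Otimes>\<^sub>M distr M T Y = distr M (S \<Otimes>\<^sub>M T) (\<lambda>x. (X x, Y x))"
    using ind unfolding indep_var_distribution_eq by auto
  interpret DX: prob_space "distr M S X" by (rule prob_space_distr) fact
  interpret DY: prob_space "distr M T Y" by (rule prob_space_distr) fact
  interpret DXY: pair_prob_space "distr M S X" "distr M T Y" ..
  have m: "(\<lambda>p. f (fst p) * h (snd p)) \<in> borel_measurable (S \<Otimes>\<^sub>M T)"
    using f h by measurable
  then have m': "(\<lambda>p. f (fst p) * h (snd p)) \<in> borel_measurable (distr M S X \<Otimes>\<^sub>M distr M T Y)"
    using measurable_cong_sets[OF sets_pair_measure_cong[OF sets_distr sets_distr] refl] by blast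
  have "(\<integral>\<^sup>+\<omega>. f (X \<omega>) * h (Y \<omega>) \<partial>M)
      = (\<integral>\<^sup>+p. f (fst p) * h (snd p) \<partial>distr M (S \<Otimes>\<^sub>M T) (\<lambda>x. (X x, Y x)))"
    using m rv by (simp add: nn_integral_distr)
  also have "\<dots> = (\<integral>\<^sup>+a. \<integral>\<^sup>+b. f a * h b \<partial>distr M T Y \<partial>distr M S X)"
    using DY.nn_integral_fst[OF m', symmetric] by (simp flip: eq)
  also have "\<dots> = (\<integral>\<^sup>+a. f a \<partial>distr M S X) * (\<integral>\<^sup>+b. h b \<partial>distr M T Y)"
    using f h by (simp add: nn_integral_cmult nn_integral_multc)
  also have "\<dots> = (\<integral>\<^sup>+\<omega>. f (X \<omega>) \<partial>M) * (\<integral>\<^sup>+\<omega>. h (Y \<omega>) \<partial>M)"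
    using f h rv by (simp add: nn_integral_distr)
  finally show ?thesis .
qed

lemma (in prob_space) indep_var_if_indep_set_vimage_algebra:
  assumes "random_variable S X" "random_variable T Y"
    and "indep_set (sets (vimage_algebra (space M) X S)) (sets (vimage_algebra (space M) Y T))"
  shows "indep_var S X T Y"
  using assms by (simp add: indep_var_eq sets_vimage_algebra)

lemma (in prob_space) indep_set_vimage_algebra_compose:
  assumes ind: "indep_set (sets (vimage_algebra (space M) X S)) B"
    and X: "X \<in> space M \<rightarrow> space S" and f: "f \<in> measurable S T"
  shows "indep_set (sets (vimage_algebra (space M) (\<lambda>\<omega>. f (X \<omega>)) T)) B"
proof -
  have "(\<lambda>\<omega>. f (X \<omega>)) \<in> measurable (vimage_algebra (space M) X S) T"
    using measurable_vimage_algebra1[OF X] f by (rule measurable_compose)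
  then have "sets (vimage_algebra (space M) (\<lambda>\<omega>. f (X \<omega>)) T) \<subseteq> sets (vimage_algebra (space M) X S)"
    by (simp add: measurable_iff_sets)
  then show ?thesis
    using indep_sets_mono_sets[OF ind[unfolded indep_set_def]] unfolding indep_set_def
    by (auto split: bool.split)
qed

lemma nn_integral_eq_if_distr_eq:
  assumes "distr M borel X = distr M borel Y"
    and "X \<in> borel_measurable M" "Y \<in> borel_measurable M" "f \<in> borel_measurable borel"
  shows "(\<integral>\<^sup>+\<omega>. f (X \<omega>) \<partial>M) = (\<integral>\<^sup>+\<omega>. f (Y \<omega>) \<partial>M)"
proof -
  have "(\<integral>\<^sup>+\<omega>. f (X \<omega>) \<partial>M) = (\<integral>\<^sup>+y. f y \<partial>distr M borel X)"
    using assms(2,4) by (simp add: nn_integral_distr)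
  also have "\<dots> = (\<integral>\<^sup>+y. f y \<partial>distr M borel Y)"
    by (simp only: assms(1))
  also have "\<dots> = (\<integral>\<^sup>+\<omega>. f (Y \<omega>) \<partial>M)"
    using assms(3,4) by (simp add: nn_integral_distr)
  finally show ?thesis .
qed

lemma stationary_proc_distr_eq:
  assumes "stationary_proc M X" and X: "\<And>t. X t \<in> borel_measurable M"
  shows "distr M borel (X s) = distr M borel (X 0)"
proof -
  have path: "(\<lambda>\<omega> t. X (t + r) \<omega>) \<in> measurable M (PiM UNIV (\<lambda>_. borel))" for r
    by (rule measurable_PiM_single') (auto simp: X)
  have coord: "(\<lambda>z. z 0) \<in> measurable (PiM (UNIV :: int set) (\<lambda>_. borel)) (borel :: real measure)"
    by simp
  have marginal: "distr M borel (X r) = distr (distr M (PiM UNIV (\<lambda>_. borel)) (\<lambda>\<omega> t. X (t + r) \<omega>)) borel (\<lambda>z. z 0)" for r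
    by (subst distr_distr[OF coord path]) (simp add: comp_def)
  have "distr M (PiM UNIV (\<lambda>_. borel)) (\<lambda>\<omega> t. X (t + s) \<omega>) = distr M (PiM UNIV (\<lambda>_. borel)) (\<lambda>\<omega> t. X (t + 0) \<omega>)"
    using assms(1) unfolding stationary_proc_def by simp
  then show ?thesis unfolding marginal by (rule arg_cong)
qed

locale iid_weighted_products = prob_space M for M :: "'a measure" +
  fixes eps x :: "int \<Rightarrow> 'a \<Rightarrow> real" and c g u :: "real \<Rightarrow> real" and Z :: "'a \<Rightarrow> real"
  assumes eps_indep: "indep_vars (\<lambda>_. borel) eps UNIV"
    and eps_id: "\<And>t. distr M borel (eps t) = distr M borel (eps 0)"
    and x_eps_indep: "indep_var (PiM UNIV (\<lambda>_. borel)) (\<lambda>\<omega> t. eps t \<omega>) (PiM UNIV (\<lambda>_. borel)) (\<lambda>\<omega> t. x t \<omega>)"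
    and x_id: "\<And>t. distr M borel (x t) = distr M borel (x 0)"
    and Z_measurable[measurable]: "Z \<in> borel_measurable M"
    and Z_eps_indep: "indep_set (sets (vimage_algebra (space M) Z borel))
      (sets (vimage_algebra (space M) (\<lambda>\<omega> t. eps t \<omega>) (PiM UNIV (\<lambda>_. borel))))"
    and c_measurable[measurable]: "c \<in> borel_measurable borel"
    and g_measurable[measurable]: "g \<in> borel_measurable borel"
    and u_measurable[measurable]: "u \<in> borel_measurable borel"
    and c_nonneg: "\<And>y. 0 \<le> c y" and g_nonneg: "\<And>y. 0 \<le> g y" and u_nonneg: "\<And>y. 0 \<le> u y"
begin

lemma eps_measurable[measurable]: "eps t \<in> borel_measurable M"
  using eps_indep by (auto simp: indep_vars_def)

lemma eps_path_measurable[measurable]: "(\<lambda>\<omega> t. eps t \<omega>) \<in> measurable M (PiM UNIV (\<lambda>_. borel))"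
  using x_eps_indep by (rule indep_var_rv1)

lemma x_measurable[measurable]: "x t \<in> borel_measurable M"
  using measurable_compose[OF indep_var_rv2[OF x_eps_indep] measurable_component_singleton[of t UNIV]]
  by simp

text \<open>Both arguments of \<open>indep_var\<close> must live in spaces of the same type, so \<open>Z\<close> is paired
  with the noise path as a constant path.\<close>
lemma Z_path_eps_indep:
  "indep_var (PiM UNIV (\<lambda>_. borel)) (\<lambda>\<omega> (t::int). Z \<omega>) (PiM UNIV (\<lambda>_. borel)) (\<lambda>\<omega> t. eps t \<omega>)"
proof (rule indep_var_if_indep_set_vimage_algebra)
  have "(\<lambda>v (t::int). v) \<in> measurable borel (PiM UNIV (\<lambda>_. borel :: real measure))"
    by (rule measurable_PiM_single') auto
  then show "indep_set (sets (vimage_algebra (space M) (\<lambda>\<omega> (t::int). Z \<omega>) (PiM UNIV (\<lambda>_. borel))))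
      (sets (vimage_algebra (space M) (\<lambda>\<omega> t. eps t \<omega>) (PiM UNIV (\<lambda>_. borel))))"
    using indep_set_vimage_algebra_compose[OF Z_eps_indep, of "\<lambda>v t. v"] by simp
  show "(\<lambda>\<omega> (t::int). Z \<omega>) \<in> measurable M (PiM UNIV (\<lambda>_. borel))"
    by (rule measurable_PiM_single') auto
qed (rule eps_path_measurable)

definition weight_prod :: "int set \<Rightarrow> 'a \<Rightarrow> real" where
  "weight_prod A \<omega> = (\<Prod>j\<in>A. c (eps j \<omega>))"

definition \<gamma> :: ennreal where
  "\<gamma> = (\<integral>\<^sup>+\<omega>. c (eps 0 \<omega>) \<partial>M)"

lemma weight_prod_nonneg: "0 \<le> weight_prod A \<omega>"
  by (simp add: weight_prod_def prod_nonneg c_nonneg)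

lemma weight_prod_measurable[measurable]: "weight_prod A \<in> borel_measurable M"
  unfolding weight_prod_def by measurable

lemma nn_integral_prod_eps:
  assumes J: "finite J" and H: "\<And>j. H j \<in> borel_measurable borel" "\<And>j y. 0 \<le> H j y"
  shows "(\<integral>\<^sup>+\<omega>. ennreal (\<Prod>j\<in>J. H j (eps j \<omega>)) \<partial>M) = (\<Prod>j\<in>J. \<integral>\<^sup>+\<omega>. H j (eps 0 \<omega>) \<partial>M)"
proof -
  have "indep_vars (\<lambda>_. borel) (\<lambda>j \<omega>. ennreal (H j (eps j \<omega>))) J"
    by (rule indep_vars_compose2[OF indep_vars_subset[OF eps_indep subset_UNIV]]) (use H in simp)
  then have "(\<integral>\<^sup>+\<omega>. (\<Prod>j\<in>J. ennreal (H j (eps j \<omega>))) \<partial>M) = (\<Prod>j\<in>J. \<integral>\<^sup>+\<omega>. H j (eps j \<omega>) \<partial>M)"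
    using J by (intro indep_vars_nn_integral) auto
  also have "\<dots> = (\<Prod>j\<in>J. \<integral>\<^sup>+\<omega>. H j (eps 0 \<omega>) \<partial>M)"
    using H by (intro prod.cong refl nn_integral_eq_if_distr_eq eps_id) auto
  finally show ?thesis using H by (simp add: prod_ennreal)
qed

lemma nn_integral_weight_prod:
  assumes A: "finite A" "a \<notin> A" and f: "f \<in> borel_measurable borel" "\<And>y. 0 \<le> f y"
  shows "(\<integral>\<^sup>+\<omega>. ennreal (f (eps a \<omega>) * weight_prod A \<omega>) \<partial>M) = (\<integral>\<^sup>+\<omega>. f (eps 0 \<omega>) \<partial>M) * \<gamma> ^ card A"
proof -
  define H where "H j = (if j = a then f else c)" for j
  have "(\<Prod>j\<in>A. H j (eps j \<omega>)) = weight_prod A \<omega>" for \<omega>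
    using A by (auto simp: H_def weight_prod_def intro!: prod.cong)
  then have "(\<integral>\<^sup>+\<omega>. ennreal (f (eps a \<omega>) * weight_prod A \<omega>) \<partial>M)
      = (\<integral>\<^sup>+\<omega>. ennreal (\<Prod>j\<in>insert a A. H j (eps j \<omega>)) \<partial>M)"
    using A by (simp add: H_def)
  also have "\<dots> = (\<Prod>j\<in>insert a A. \<integral>\<^sup>+\<omega>. H j (eps 0 \<omega>) \<partial>M)"
    using A f c_nonneg by (intro nn_integral_prod_eps) (auto simp: H_def)
  also have "(\<Prod>j\<in>A. \<integral>\<^sup>+\<omega>. H j (eps 0 \<omega>) \<partial>M) = (\<Prod>j\<in>A. \<gamma>)"
    using A by (intro prod.cong) (auto simp: H_def \<gamma>_def)
  then have "(\<Prod>j\<in>insert a A. \<integral>\<^sup>+\<omega>. H j (eps 0 \<omega>) \<partial>M) = (\<integral>\<^sup>+\<omega>. f (eps 0 \<omega>) \<partial>M) * \<gamma> ^ card A"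
    using A by (simp add: H_def)
  finally show ?thesis .
qed

lemma nn_integral_two_weight_prod:
  assumes A: "finite A" "a \<notin> A" "b \<notin> A" "a \<noteq> b"
    and f: "f \<in> borel_measurable borel" "\<And>y. 0 \<le> f y"
    and h: "h \<in> borel_measurable borel" "\<And>y. 0 \<le> h y"
  shows "(\<integral>\<^sup>+\<omega>. ennreal (f (eps a \<omega>) * h (eps b \<omega>) * weight_prod A \<omega>) \<partial>M)
     = (\<integral>\<^sup>+\<omega>. f (eps 0 \<omega>) \<partial>M) * (\<integral>\<^sup>+\<omega>. h (eps 0 \<omega>) \<partial>M) * \<gamma> ^ card A"
proof -
  define H where "H j = (if j = a then f else if j = b then h else c)" for j
  have "(\<Prod>j\<in>A. H j (eps j \<omega>)) = weight_prod A \<omega>" for \<omega>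
    using A by (auto simp: H_def weight_prod_def intro!: prod.cong)
  then have "(\<integral>\<^sup>+\<omega>. ennreal (f (eps a \<omega>) * h (eps b \<omega>) * weight_prod A \<omega>) \<partial>M)
      = (\<integral>\<^sup>+\<omega>. ennreal (\<Prod>j\<in>insert a (insert b A). H j (eps j \<omega>)) \<partial>M)"
    using A by (simp add: H_def mult.assoc)
  also have "\<dots> = (\<Prod>j\<in>insert a (insert b A). \<integral>\<^sup>+\<omega>. H j (eps 0 \<omega>) \<partial>M)"
    using A f h c_nonneg by (intro nn_integral_prod_eps) (auto simp: H_def)
  also have "(\<Prod>j\<in>A. \<integral>\<^sup>+\<omega>. H j (eps 0 \<omega>) \<partial>M) = (\<Prod>j\<in>A. \<gamma>)"
    using A by (intro prod.cong) (auto simp: H_def \<gamma>_def)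
  then have "(\<Prod>j\<in>insert a (insert b A). \<integral>\<^sup>+\<omega>. H j (eps 0 \<omega>) \<partial>M)
      = (\<integral>\<^sup>+\<omega>. f (eps 0 \<omega>) \<partial>M) * (\<integral>\<^sup>+\<omega>. h (eps 0 \<omega>) \<partial>M) * \<gamma> ^ card A"
    using A by (simp add: H_def mult.assoc)
  finally show ?thesis .
qed

lemma weight_prod_split:
  "weight_prod {0..<int t} \<omega> * weight_prod {-int k..<0} \<omega> = weight_prod {-int k..<int t} \<omega>"
proof -
  have "{-int k..<int t} = {-int k..<0} \<union> {0..<int t}" by auto
  then show ?thesis by (simp add: weight_prod_def prod.union_disjoint mult.commute)
qed

definition series_bound :: "'a \<Rightarrow> ennreal" where
  "series_bound \<omega> = (\<Sum>k. ennreal (weight_prod {-int k..<0} \<omega> * g (eps (-1 - int k) \<omega>))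
      + ennreal (weight_prod {-int k..<0} \<omega> * u (x (-1 - int k) \<omega>)))"

context
  fixes e :: "real \<Rightarrow> real" and t :: nat
  assumes e_measurable[measurable]: "e \<in> borel_measurable borel" and e_nonneg: "\<And>y. 0 \<le> e y"
begin

lemma nn_integral_Z_term:
  "(\<integral>\<^sup>+\<omega>. ennreal (e (eps (int t) \<omega>) * weight_prod {0..<int t} \<omega>) * ennreal (Z \<omega>) \<partial>M)
    = (\<integral>\<^sup>+\<omega>. e (eps 0 \<omega>) \<partial>M) * \<gamma> ^ t * (\<integral>\<^sup>+\<omega>. Z \<omega> \<partial>M)"
proof -
  have Z0: "(\<lambda>z. ennreal (z 0)) \<in> borel_measurable (PiM (UNIV :: int set) (\<lambda>_. borel))"
    by measurable
  have weights: "(\<lambda>z. ennreal (e (z (int t)) * (\<Prod>j\<in>{0..<int t}. c (z j)))) \<in> borel_measurable (PiM UNIV (\<lambda>_. borel))"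
    by measurable
  have "(\<integral>\<^sup>+\<omega>. ennreal (Z \<omega>) * ennreal (e (eps (int t) \<omega>) * weight_prod {0..<int t} \<omega>) \<partial>M)
      = (\<integral>\<^sup>+\<omega>. Z \<omega> \<partial>M) * (\<integral>\<^sup>+\<omega>. ennreal (e (eps (int t) \<omega>) * weight_prod {0..<int t} \<omega>) \<partial>M)"
    using indep_var_nn_integral_mult[OF Z_path_eps_indep Z0 weights] by (simp add: weight_prod_def)
  also have "\<dots> = (\<integral>\<^sup>+\<omega>. Z \<omega> \<partial>M) * ((\<integral>\<^sup>+\<omega>. e (eps 0 \<omega>) \<partial>M) * \<gamma> ^ t)"
    using nn_integral_weight_prod[of "{0..<int t}" "int t" e] e_nonneg by simp
  finally show ?thesis by (simp add: mult.commute)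
qed

lemma nn_integral_g_term:
  "(\<integral>\<^sup>+\<omega>. ennreal (e (eps (int t) \<omega>) * weight_prod {0..<int t} \<omega>)
        * ennreal (weight_prod {-int k..<0} \<omega> * g (eps (-1 - int k) \<omega>)) \<partial>M)
    = (\<integral>\<^sup>+\<omega>. e (eps 0 \<omega>) \<partial>M) * \<gamma> ^ t * (\<integral>\<^sup>+\<omega>. g (eps 0 \<omega>) \<partial>M) * \<gamma> ^ k"
proof -
  have "(\<integral>\<^sup>+\<omega>. ennreal (e (eps (int t) \<omega>) * weight_prod {0..<int t} \<omega>)
        * ennreal (weight_prod {-int k..<0} \<omega> * g (eps (-1 - int k) \<omega>)) \<partial>M)
      = (\<integral>\<^sup>+\<omega>. ennreal (e (eps (int t) \<omega>) * g (eps (-1 - int k) \<omega>) * weight_prod {-int k..<int t} \<omega>) \<partial>M)"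
    using e_nonneg g_nonneg weight_prod_nonneg
    by (simp add: ennreal_mult' flip: weight_prod_split) (simp add: ac_simps)
  also have "\<dots> = (\<integral>\<^sup>+\<omega>. e (eps 0 \<omega>) \<partial>M) * (\<integral>\<^sup>+\<omega>. g (eps 0 \<omega>) \<partial>M) * \<gamma> ^ (t + k)"
    using nn_integral_two_weight_prod[of "{-int k..<int t}" "int t" "-1 - int k" e g] e_nonneg g_nonneg
    by (simp add: nat_add_distrib)
  finally show ?thesis by (simp add: power_add ac_simps)
qed

lemma nn_integral_u_term:
  "(\<integral>\<^sup>+\<omega>. ennreal (e (eps (int t) \<omega>) * weight_prod {0..<int t} \<omega>)
        * ennreal (weight_prod {-int k..<0} \<omega> * u (x (-1 - int k) \<omega>)) \<partial>M)
    = (\<integral>\<^sup>+\<omega>. e (eps 0 \<omega>) \<partial>M) * \<gamma> ^ t * (\<integral>\<^sup>+\<omega>. u (x 0 \<omega>) \<partial>M) * \<gamma> ^ k"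
proof -
  have weights: "(\<lambda>z. ennreal (e (z (int t)) * (\<Prod>j\<in>{-int k..<int t}. c (z j)))) \<in> borel_measurable (PiM UNIV (\<lambda>_. borel))"
    by measurable
  have u_past: "(\<lambda>z. ennreal (u (z (-1 - int k)))) \<in> borel_measurable (PiM (UNIV :: int set) (\<lambda>_. borel))"
    by measurable
  have "(\<integral>\<^sup>+\<omega>. ennreal (e (eps (int t) \<omega>) * weight_prod {-int k..<int t} \<omega>) * ennreal (u (x (-1 - int k) \<omega>)) \<partial>M)
      = (\<integral>\<^sup>+\<omega>. ennreal (e (eps (int t) \<omega>) * weight_prod {-int k..<int t} \<omega>) \<partial>M) * (\<integral>\<^sup>+\<omega>. u (x (-1 - int k) \<omega>) \<partial>M)"
    using indep_var_nn_integral_mult[OF x_eps_indep weights u_past] by (simp add: weight_prod_def)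
  also have "\<dots> = (\<integral>\<^sup>+\<omega>. e (eps 0 \<omega>) \<partial>M) * \<gamma> ^ (t + k) * (\<integral>\<^sup>+\<omega>. u (x 0 \<omega>) \<partial>M)"
  proof -
    have "(\<integral>\<^sup>+\<omega>. u (x (-1 - int k) \<omega>) \<partial>M) = (\<integral>\<^sup>+\<omega>. u (x 0 \<omega>) \<partial>M)"
      by (rule nn_integral_eq_if_distr_eq[OF x_id]) measurable
    then show ?thesis
      using nn_integral_weight_prod[of "{-int k..<int t}" "int t" e] e_nonneg by (simp add: nat_add_distrib)
  qed
  finally show ?thesis
    using e_nonneg u_nonneg weight_prod_nonneg
    by (simp add: ennreal_mult' power_add ac_simps flip: weight_prod_split)
qed

lemma nn_integral_weight_series_bound:
  "(\<integral>\<^sup>+\<omega>. ennreal (e (eps (int t) \<omega>) * weight_prod {0..<int t} \<omega>) * (ennreal (Z \<omega>) + series_bound \<omega>) \<partial>M)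
    = (\<integral>\<^sup>+\<omega>. e (eps 0 \<omega>) \<partial>M) * \<gamma> ^ t *
      ((\<integral>\<^sup>+\<omega>. Z \<omega> \<partial>M) + (\<Sum>k. \<gamma> ^ k) * ((\<integral>\<^sup>+\<omega>. g (eps 0 \<omega>) \<partial>M) + (\<integral>\<^sup>+\<omega>. u (x 0 \<omega>) \<partial>M)))"
  (is "_ = ?E * \<gamma> ^ t * (?Z + (\<Sum>k. \<gamma> ^ k) * (?G + ?U))")
proof -
  let ?T = "\<lambda>\<omega>. ennreal (e (eps (int t) \<omega>) * weight_prod {0..<int t} \<omega>)"
  have "(\<integral>\<^sup>+\<omega>. ?T \<omega> * (ennreal (Z \<omega>) + series_bound \<omega>) \<partial>M)
      = (\<integral>\<^sup>+\<omega>. ?T \<omega> * ennreal (Z \<omega>) \<partial>M)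
        + (\<Sum>k. (\<integral>\<^sup>+\<omega>. ?T \<omega> * ennreal (weight_prod {-int k..<0} \<omega> * g (eps (-1 - int k) \<omega>)) \<partial>M)
             + (\<integral>\<^sup>+\<omega>. ?T \<omega> * ennreal (weight_prod {-int k..<0} \<omega> * u (x (-1 - int k) \<omega>)) \<partial>M))"
    by (simp add: series_bound_def distrib_left nn_integral_add nn_integral_suminf flip: ennreal_suminf_cmult)
  also have "\<dots> = ?E * \<gamma> ^ t * ?Z + (\<Sum>k. ?E * \<gamma> ^ t * (?G + ?U) * \<gamma> ^ k)"
    unfolding nn_integral_Z_term nn_integral_g_term nn_integral_u_term by (simp add: algebra_simps)
  also have "\<dots> = ?E * \<gamma> ^ t * ?Z + ?E * \<gamma> ^ t * (?G + ?U) * (\<Sum>k. \<gamma> ^ k)"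
    by (simp only: ennreal_suminf_cmult)
  also have "\<dots> = ?E * \<gamma> ^ t * (?Z + (\<Sum>k. \<gamma> ^ k) * (?G + ?U))"
    by (simp add: algebra_simps)
  finally show ?thesis .
qed

end

end

locale power_recursion = prob_space M for M :: "'a measure" +
  fixes eps x :: "int \<Rightarrow> 'a \<Rightarrow> real" and g u c :: "real \<Rightarrow> real" and \<delta> \<alpha> :: real
    and \<sigma> :: "int \<Rightarrow> 'a \<Rightarrow> real" and \<sigma>t :: "nat \<Rightarrow> 'a \<Rightarrow> real"
  assumes eps_indep: "indep_vars (\<lambda>_. borel) eps UNIV"
    and eps_id: "\<And>t. distr M borel (eps t) = distr M borel (eps 0)"
    and x_rv: "\<And>t. x t \<in> borel_measurable M"
    and x_stat: "stationary_proc M x"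
    and x_eps_indep: "indep_var (PiM UNIV (\<lambda>_. borel)) (\<lambda>\<omega> t. eps t \<omega>) (PiM UNIV (\<lambda>_. borel)) (\<lambda>\<omega> t. x t \<omega>)"
    and g_cont: "continuous_on UNIV g" and g_nn: "\<And>y. g y \<ge> 0"
    and u_cont: "continuous_on UNIV u" and u_nn: "\<And>y. u y \<ge> 0"
    and c_cont: "continuous_on UNIV c" and c_nn: "\<And>y. c y \<ge> 0"
    and alpha: "0 < \<alpha>" "\<alpha> \<le> 1"
    and mom_u: "\<And>t. integrable M (\<lambda>\<omega>. u (x t \<omega>) powr \<alpha>)"
    and mom_c_int: "\<And>t. integrable M (\<lambda>\<omega>. c (eps t \<omega>) powr \<alpha>)"
    and mom_c: "\<And>t. expectation (\<lambda>\<omega>. c (eps t \<omega>) powr \<alpha>) < 1"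
    and mom_g: "\<And>t. integrable M (\<lambda>\<omega>. g (eps t \<omega>) powr \<alpha>)"
    and sigma_eq: "\<And>t. AE \<omega> in M.
          (\<lambda>k. (\<Prod>j<Suc k. c (eps (t - 1 - int j) \<omega>)) *
                 (g (eps (t - 1 - int (Suc k)) \<omega>) + u (x (t - 1 - int (Suc k)) \<omega>)))
          sums (\<bar>\<sigma> t \<omega>\<bar> powr \<delta> - g (eps (t - 1) \<omega>) - u (x (t - 1) \<omega>))"
    and sigt_rec: "\<And>n \<omega>. \<bar>\<sigma>t (Suc n) \<omega>\<bar> powr \<delta> =
          g (eps (int n) \<omega>) + u (x (int n) \<omega>) + c (eps (int n) \<omega>) * \<bar>\<sigma>t n \<omega>\<bar> powr \<delta>"
    and sigma_rv: "\<And>t. \<sigma> t \<in> borel_measurable M"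
    and sigt0_rv: "\<sigma>t 0 \<in> borel_measurable M"
    and sigt0_indep: "indep_set (sets (vimage_algebra (space M) (\<sigma>t 0) borel))
          (sets (vimage_algebra (space M) (\<lambda>\<omega> t. eps t \<omega>) (PiM UNIV (\<lambda>_. borel))))"
    and sigt0_mom: "integrable M (\<lambda>\<omega>. \<bar>\<sigma>t 0 \<omega>\<bar> powr (\<delta> * \<alpha>))"
begin

declare sigma_rv[measurable] sigt0_rv[measurable]

lemma g_measurable[measurable]: "g \<in> borel_measurable borel"
  and u_measurable[measurable]: "u \<in> borel_measurable borel"
  and c_measurable[measurable]: "c \<in> borel_measurable borel"
  using g_cont u_cont c_cont by (auto intro: borel_measurable_continuous_onI)

sublocale iid: iid_weighted_products M eps x "\<lambda>y. c y powr \<alpha>" "\<lambda>y. g y powr \<alpha>" "\<lambda>y. u y powr \<alpha>"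
  "\<lambda>\<omega>. \<bar>\<sigma>t 0 \<omega>\<bar> powr (\<delta> * \<alpha>)"
proof unfold_locales
  show "distr M borel (x t) = distr M borel (x 0)" for t
    using x_stat x_rv by (rule stationary_proc_distr_eq)
  show "indep_set (sets (vimage_algebra (space M) (\<lambda>\<omega>. \<bar>\<sigma>t 0 \<omega>\<bar> powr (\<delta> * \<alpha>)) borel))
      (sets (vimage_algebra (space M) (\<lambda>\<omega> t. eps t \<omega>) (PiM UNIV (\<lambda>_. borel))))"
    by (rule indep_set_vimage_algebra_compose[OF sigt0_indep]) auto
qed (use eps_indep eps_id x_eps_indep sigt0_rv in \<open>auto\<close>)

definition \<xi> :: "nat \<Rightarrow> 'a \<Rightarrow> real" where
  "\<xi> n \<omega> = \<bar>\<sigma>t n \<omega>\<bar> powr \<delta> - \<bar>\<sigma> (int n) \<omega>\<bar> powr \<delta>"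

lemma sigma_powr_recursion:
  "AE \<omega> in M. \<forall>t. \<bar>\<sigma> t \<omega>\<bar> powr \<delta> = g (eps (t - 1) \<omega>) + u (x (t - 1) \<omega>) + c (eps (t - 1) \<omega>) * \<bar>\<sigma> (t - 1) \<omega>\<bar> powr \<delta>"
proof -
  have "AE \<omega> in M. \<forall>t. (\<lambda>k. (\<Prod>j<Suc k. c (eps (t - 1 - int j) \<omega>)) *
                 (g (eps (t - 1 - int (Suc k)) \<omega>) + u (x (t - 1 - int (Suc k)) \<omega>)))
          sums (\<bar>\<sigma> t \<omega>\<bar> powr \<delta> - g (eps (t - 1) \<omega>) - u (x (t - 1) \<omega>))"
    unfolding AE_all_countable using sigma_eq by blast
  then show ?thesis
  proof eventually_elim
    case (elim \<omega>)
    then have series: "(\<lambda>k. (\<Prod>j<Suc k. c (eps (t - 1 - int j) \<omega>)) *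
                 (g (eps (t - 1 - int (Suc k)) \<omega>) + u (x (t - 1 - int (Suc k)) \<omega>)))
          sums (\<bar>\<sigma> t \<omega>\<bar> powr \<delta> - (g (eps (t - 1) \<omega>) + u (x (t - 1) \<omega>)))" for t
      by (simp only: diff_diff_eq)
    show ?case
      using backward_series_recursion[of "\<lambda>t. c (eps t \<omega>)" "\<lambda>t. g (eps t \<omega>) + u (x t \<omega>)"
          "\<lambda>t. \<bar>\<sigma> t \<omega>\<bar> powr \<delta>", OF series] by blast
  qed
qed

lemma \<xi>_eq_prod: "AE \<omega> in M. \<forall>n. \<xi> n \<omega> = (\<Prod>j\<in>{0..<int n}. c (eps j \<omega>)) * \<xi> 0 \<omega>"
  using sigma_powr_recursion
proof eventually_elim
  case (elim \<omega>)
  have "\<xi> (Suc n) \<omega> = c (eps (int n) \<omega>) * \<xi> n \<omega>" for n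
    using sigt_rec[of n \<omega>] elim[rule_format, of "int n + 1"] by (simp add: \<xi>_def algebra_simps)
  then show ?case
    using linear_recurrence_eq_prod[of "\<lambda>n. \<xi> n \<omega>" "\<lambda>j. c (eps j \<omega>)"] by blast
qed

lemma sigma0_powr_le_series_bound:
  "AE \<omega> in M. ennreal ((\<bar>\<sigma> 0 \<omega>\<bar> powr \<delta>) powr \<alpha>) \<le> iid.series_bound \<omega>"
  using sigma_eq[of 0]
proof eventually_elim
  case (elim \<omega>)
  define b where "b k = (\<Prod>j<k. c (eps (-1 - int j) \<omega>)) * (g (eps (-1 - int k) \<omega>) + u (x (-1 - int k) \<omega>))" for k
  have b_nonneg: "0 \<le> b k" for k
    using c_nn g_nn u_nn by (simp add: b_def prod_nonneg)
  have "(\<lambda>k. b (Suc k)) sums (\<bar>\<sigma> 0 \<omega>\<bar> powr \<delta> - b 0)"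
    using elim by (simp add: b_def diff_diff_eq)
  then have "b sums (\<bar>\<sigma> 0 \<omega>\<bar> powr \<delta>)" by (simp add: sums_Suc_iff)
  then have "ennreal ((\<bar>\<sigma> 0 \<omega>\<bar> powr \<delta>) powr \<alpha>) \<le> (\<Sum>k. ennreal (b k powr \<alpha>))"
    by (rule ennreal_powr_le_suminf_powr[OF b_nonneg alpha])
  also have "\<dots> \<le> iid.series_bound \<omega>"
    unfolding iid.series_bound_def
  proof (rule suminf_le[OF _ summableI summableI])
    fix k
    define P where "P = (\<Prod>j\<in>{-int k..<0}. c (eps j \<omega>))"
    have P: "0 \<le> P" "P powr \<alpha> = iid.weight_prod {-int k..<0} \<omega>"
      using c_nn by (simp_all add: P_def prod_nonneg iid.weight_prod_def prod_powr_distrib)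
    have "b k = P * (g (eps (-1 - int k) \<omega>) + u (x (-1 - int k) \<omega>))"
      by (simp add: b_def P_def prod_lessThan_reflect_int[of "\<lambda>j. c (eps j \<omega>)"])
    then have "b k powr \<alpha> = P powr \<alpha> * (g (eps (-1 - int k) \<omega>) + u (x (-1 - int k) \<omega>)) powr \<alpha>"
      using P g_nn u_nn by (simp add: powr_mult)
    also have "\<dots> \<le> P powr \<alpha> * (g (eps (-1 - int k) \<omega>) powr \<alpha> + u (x (-1 - int k) \<omega>) powr \<alpha>)"
      using g_nn u_nn alpha by (intro mult_left_mono powr_add_le_add_powr) auto
    finally have "b k powr \<alpha> \<le> P powr \<alpha> * g (eps (-1 - int k) \<omega>) powr \<alpha> + P powr \<alpha> * u (x (-1 - int k) \<omega>) powr \<alpha>"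
      by (simp add: distrib_left)
    then have "ennreal (b k powr \<alpha>) \<le> ennreal (P powr \<alpha> * g (eps (-1 - int k) \<omega>) powr \<alpha>
        + P powr \<alpha> * u (x (-1 - int k) \<omega>) powr \<alpha>)"
      by (rule ennreal_leI)
    also have "\<dots> = ennreal (P powr \<alpha> * g (eps (-1 - int k) \<omega>) powr \<alpha>)
        + ennreal (P powr \<alpha> * u (x (-1 - int k) \<omega>) powr \<alpha>)"
      by (intro ennreal_plus) auto
    finally show "ennreal (b k powr \<alpha>) \<le> ennreal (iid.weight_prod {-int k..<0} \<omega> * g (eps (-1 - int k) \<omega>) powr \<alpha>)
        + ennreal (iid.weight_prod {-int k..<0} \<omega> * u (x (-1 - int k) \<omega>) powr \<alpha>)"
      by (simp only: P(2))
  qed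
  finally show ?case .
qed

lemma \<xi>_powr_le:
  "AE \<omega> in M. ennreal (\<bar>\<xi> t \<omega>\<bar> powr \<alpha>)
     \<le> ennreal (iid.weight_prod {0..<int t} \<omega>) * (ennreal (\<bar>\<sigma>t 0 \<omega>\<bar> powr (\<delta> * \<alpha>)) + iid.series_bound \<omega>)"
  using \<xi>_eq_prod sigma0_powr_le_series_bound
proof eventually_elim
  case (elim \<omega>)
  define P where "P = (\<Prod>j\<in>{0..<int t}. c (eps j \<omega>))"
  have P: "0 \<le> P" "P powr \<alpha> = iid.weight_prod {0..<int t} \<omega>"
    using c_nn by (simp_all add: P_def prod_nonneg iid.weight_prod_def prod_powr_distrib)
  have "\<bar>\<xi> t \<omega>\<bar> powr \<alpha> = \<bar>P * (\<bar>\<sigma>t 0 \<omega>\<bar> powr \<delta> - \<bar>\<sigma> 0 \<omega>\<bar> powr \<delta>)\<bar> powr \<alpha>"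
    using elim(1) by (simp add: P_def \<xi>_def)
  also have "\<dots> \<le> P powr \<alpha> * (\<bar>\<sigma>t 0 \<omega>\<bar> powr (\<delta> * \<alpha>) + (\<bar>\<sigma> 0 \<omega>\<bar> powr \<delta>) powr \<alpha>)"
    using abs_mult_diff_powr_le[OF P(1) _ _ alpha, of "\<bar>\<sigma>t 0 \<omega>\<bar> powr \<delta>" "\<bar>\<sigma> 0 \<omega>\<bar> powr \<delta>"]
    by (simp add: powr_powr)
  finally have "ennreal (\<bar>\<xi> t \<omega>\<bar> powr \<alpha>)
      \<le> ennreal (P powr \<alpha> * (\<bar>\<sigma>t 0 \<omega>\<bar> powr (\<delta> * \<alpha>) + (\<bar>\<sigma> 0 \<omega>\<bar> powr \<delta>) powr \<alpha>))"
    by (rule ennreal_leI)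
  also have "\<dots> = ennreal (P powr \<alpha>) * (ennreal (\<bar>\<sigma>t 0 \<omega>\<bar> powr (\<delta> * \<alpha>)) + ennreal ((\<bar>\<sigma> 0 \<omega>\<bar> powr \<delta>) powr \<alpha>))"
    by (simp add: ennreal_mult ennreal_plus)
  also have "\<dots> \<le> ennreal (P powr \<alpha>) * (ennreal (\<bar>\<sigma>t 0 \<omega>\<bar> powr (\<delta> * \<alpha>)) + iid.series_bound \<omega>)"
    by (rule mult_left_mono[OF add_left_mono[OF elim(2)]]) simp
  finally show ?case unfolding P(2) .
qed

definition rate :: real where
  "rate = expectation (\<lambda>\<omega>. c (eps 0 \<omega>) powr \<alpha>)"

definition K :: real where
  "K = expectation (\<lambda>\<omega>. \<bar>\<sigma>t 0 \<omega>\<bar> powr (\<delta> * \<alpha>))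
     + 1 / (1 - rate) * (expectation (\<lambda>\<omega>. g (eps 0 \<omega>) powr \<alpha>) + expectation (\<lambda>\<omega>. u (x 0 \<omega>) powr \<alpha>))"

lemma rate_nonneg: "0 \<le> rate" and rate_less_1: "rate < 1"
  using mom_c[of 0] by (auto simp: rate_def)

lemma K_nonneg: "0 \<le> K"
  using rate_less_1 by (auto simp: K_def intro!: add_nonneg_nonneg mult_nonneg_nonneg)

lemma nn_integral_weight_series_bound_eq:
  assumes e: "e \<in> borel_measurable borel" "\<And>y. 0 \<le> e y" "integrable M (\<lambda>\<omega>. e (eps 0 \<omega>))"
  shows "(\<integral>\<^sup>+\<omega>. ennreal (e (eps (int t) \<omega>) * iid.weight_prod {0..<int t} \<omega>)
            * (ennreal (\<bar>\<sigma>t 0 \<omega>\<bar> powr (\<delta> * \<alpha>)) + iid.series_bound \<omega>) \<partial>M)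
    = ennreal (expectation (\<lambda>\<omega>. e (eps 0 \<omega>)) * K * rate ^ t)"
proof -
  have expectations:
    "iid.\<gamma> = ennreal rate"
    "(\<integral>\<^sup>+\<omega>. e (eps 0 \<omega>) \<partial>M) = ennreal (expectation (\<lambda>\<omega>. e (eps 0 \<omega>)))"
    "(\<integral>\<^sup>+\<omega>. \<bar>\<sigma>t 0 \<omega>\<bar> powr (\<delta> * \<alpha>) \<partial>M) = ennreal (expectation (\<lambda>\<omega>. \<bar>\<sigma>t 0 \<omega>\<bar> powr (\<delta> * \<alpha>)))"
    "(\<integral>\<^sup>+\<omega>. g (eps 0 \<omega>) powr \<alpha> \<partial>M) = ennreal (expectation (\<lambda>\<omega>. g (eps 0 \<omega>) powr \<alpha>))"
    "(\<integral>\<^sup>+\<omega>. u (x 0 \<omega>) powr \<alpha> \<partial>M) = ennreal (expectation (\<lambda>\<omega>. u (x 0 \<omega>) powr \<alpha>))"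
    unfolding iid.\<gamma>_def rate_def
    using e mom_c_int mom_g mom_u sigt0_mom by (auto intro!: nn_integral_eq_integral)
  have "(\<Sum>k. ennreal rate ^ k) = ennreal (\<Sum>k. rate ^ k)"
    using rate_nonneg rate_less_1 by (auto simp: ennreal_power intro!: suminf_ennreal2 summable_geometric)
  also have "\<dots> = ennreal (1 / (1 - rate))"
    using rate_nonneg rate_less_1 by (simp add: suminf_geometric)
  finally have geometric: "(\<Sum>k. ennreal rate ^ k) = ennreal (1 / (1 - rate))" .
  have nonneg: "0 \<le> expectation (\<lambda>\<omega>. \<bar>\<sigma>t 0 \<omega>\<bar> powr (\<delta> * \<alpha>))"
      "0 \<le> expectation (\<lambda>\<omega>. g (eps 0 \<omega>) powr \<alpha>)" "0 \<le> expectation (\<lambda>\<omega>. u (x 0 \<omega>) powr \<alpha>)"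
      "0 \<le> 1 / (1 - rate)" "0 \<le> expectation (\<lambda>\<omega>. e (eps 0 \<omega>))"
    using rate_less_1 e(2) by (auto intro!: integral_nonneg_AE)
  have "ennreal (a + b * (c + d)) = ennreal a + ennreal b * (ennreal c + ennreal d)"
    if "0 \<le> a" "0 \<le> b" "0 \<le> c" "0 \<le> d" for a b c d :: real
    using that by (simp add: ennreal_mult')
  from this[OF nonneg(1,4,2,3)] show ?thesis
    unfolding iid.nn_integral_weight_series_bound[OF e(1,2)] expectations geometric
    using rate_nonneg nonneg(5) by (simp add: K_def ennreal_power ennreal_mult' ac_simps)
qed

lemma \<xi>_measurable[measurable]: "\<xi> t \<in> borel_measurable M"
proof -
  have "(\<lambda>\<omega>. \<bar>\<sigma>t n \<omega>\<bar> powr \<delta>) \<in> borel_measurable M" for n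
  proof (induction n)
    case (Suc n)
    then show ?case unfolding sigt_rec by measurable
  qed measurable
  then show ?thesis unfolding \<xi>_def by measurable
qed

context
  fixes e :: "real \<Rightarrow> real"
  assumes e: "e \<in> borel_measurable borel" "\<And>y. 0 \<le> e y" "integrable M (\<lambda>\<omega>. e (eps 0 \<omega>))"
begin

lemma integrable_weighted_\<xi>: "integrable M (\<lambda>\<omega>. e (eps (int t) \<omega>) * \<bar>\<xi> t \<omega>\<bar> powr \<alpha>)"
  and expectation_weighted_\<xi>_le:
    "expectation (\<lambda>\<omega>. e (eps (int t) \<omega>) * \<bar>\<xi> t \<omega>\<bar> powr \<alpha>) \<le> expectation (\<lambda>\<omega>. e (eps 0 \<omega>)) * K * rate ^ t"
proof -
  have "AE \<omega> in M. ennreal (e (eps (int t) \<omega>) * \<bar>\<xi> t \<omega>\<bar> powr \<alpha>)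
      \<le> ennreal (e (eps (int t) \<omega>) * iid.weight_prod {0..<int t} \<omega>)
        * (ennreal (\<bar>\<sigma>t 0 \<omega>\<bar> powr (\<delta> * \<alpha>)) + iid.series_bound \<omega>)"
    using \<xi>_powr_le[of t]
  proof eventually_elim
    case (elim \<omega>)
    then have "ennreal (e (eps (int t) \<omega>)) * ennreal (\<bar>\<xi> t \<omega>\<bar> powr \<alpha>) \<le> ennreal (e (eps (int t) \<omega>))
        * (ennreal (iid.weight_prod {0..<int t} \<omega>) * (ennreal (\<bar>\<sigma>t 0 \<omega>\<bar> powr (\<delta> * \<alpha>)) + iid.series_bound \<omega>))"
      by (rule mult_left_mono) simp
    then show ?case using e(2) by (simp add: ennreal_mult' mult.assoc)
  qed
  then have "(\<integral>\<^sup>+\<omega>. ennreal (e (eps (int t) \<omega>) * \<bar>\<xi> t \<omega>\<bar> powr \<alpha>) \<partial>M)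
      \<le> ennreal (expectation (\<lambda>\<omega>. e (eps 0 \<omega>)) * K * rate ^ t)"
    unfolding nn_integral_weight_series_bound_eq[OF e, symmetric] by (rule nn_integral_mono_AE)
  moreover have "0 \<le> expectation (\<lambda>\<omega>. e (eps 0 \<omega>)) * K * rate ^ t"
    using e(2) K_nonneg rate_nonneg by (simp add: integral_nonneg_AE)
  moreover have "(\<lambda>\<omega>. e (eps (int t) \<omega>) * \<bar>\<xi> t \<omega>\<bar> powr \<alpha>) \<in> borel_measurable M"
    using e(1) by measurable
  ultimately show "integrable M (\<lambda>\<omega>. e (eps (int t) \<omega>) * \<bar>\<xi> t \<omega>\<bar> powr \<alpha>)"
    "expectation (\<lambda>\<omega>. e (eps (int t) \<omega>) * \<bar>\<xi> t \<omega>\<bar> powr \<alpha>) \<le> expectation (\<lambda>\<omega>. e (eps 0 \<omega>)) * K * rate ^ t"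
    using e(2) by (auto intro: integrable_integral_le_if_nn_integral_le)
qed

lemma expectation_weighted_\<xi>_bigo:
  assumes "rate \<le> \<rho>"
  shows "(\<lambda>t. expectation (\<lambda>\<omega>. e (eps (int t) \<omega>) * \<bar>\<xi> t \<omega>\<bar> powr \<alpha>)) \<in> O(\<lambda>t. \<rho> ^ t)"
  using expectation_weighted_\<xi>_le rate_nonneg assms e(2)
  by (intro bigo_power_if_le_mult_power) (auto intro: integral_nonneg_AE)

end

end

theorem proposition3p2:
  fixes M :: "'a measure"
    and F :: "int \<Rightarrow> 'a measure"
    and eps x :: "int \<Rightarrow> 'a \<Rightarrow> real"
    and g u c :: "real \<Rightarrow> real"
    and \<delta> \<alpha> :: real
    and \<sigma> R :: "int \<Rightarrow> 'a \<Rightarrow> real"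
    and \<sigma>t Rt :: "nat \<Rightarrow> 'a \<Rightarrow> real"
  assumes P: "prob_space M"
    and delta: "\<delta> \<ge> 0"
    and g_cont: "continuous_on UNIV g" and g_nn: "\<And>y. g y \<ge> 0"
    and u_cont: "continuous_on UNIV u" and u_nn: "\<And>y. u y \<ge> 0"
    and c_cont: "continuous_on UNIV c" and c_nn: "\<And>y. c y \<ge> 0"
    and eps_indep: "prob_space.indep_vars M (\<lambda>_. borel) eps UNIV"
    and eps_id: "\<And>t. distr M borel (eps t) = distr M borel (eps 0)"
    and eps_sq_int: "\<And>t. integrable M (\<lambda>\<omega>. (eps t \<omega>)\<^sup>2)"
    and eps_mean: "\<And>t. prob_space.expectation M (eps t) = 0"
    and eps_var: "\<And>t. prob_space.expectation M (\<lambda>\<omega>. (eps t \<omega>)\<^sup>2) = 1"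
    and x_rv: "\<And>t. x t \<in> borel_measurable M"
    and x_stat: "stationary_proc M x"
    and x_erg: "ergodic_proc M x"
    and x_eps_indep: "prob_space.indep_var M
          (PiM UNIV (\<lambda>_. borel)) (\<lambda>\<omega> t. eps t \<omega>) (PiM UNIV (\<lambda>_. borel)) (\<lambda>\<omega> t. x t \<omega>)"
    and F_sub: "\<And>t. subalgebra M (F t)"
    and F_mono: "\<And>s t. s \<le> t \<Longrightarrow> sets (F s) \<subseteq> sets (F t)"
    and eps_adapt: "\<And>t. eps t \<in> borel_measurable (F t)"
    and x_adapt: "\<And>t. x t \<in> borel_measurable (F t)"
    and alpha: "0 < \<alpha>" "\<alpha> \<le> 1"
    and mom_eps: "\<And>t. integrable M (\<lambda>\<omega>. \<bar>eps t \<omega>\<bar> powr (\<delta> * \<alpha>))"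
    and mom_u: "\<And>t. integrable M (\<lambda>\<omega>. u (x t \<omega>) powr \<alpha>)"
    and mom_c_int: "\<And>t. integrable M (\<lambda>\<omega>. c (eps t \<omega>) powr \<alpha>)"
    and mom_c: "\<And>t. prob_space.expectation M (\<lambda>\<omega>. c (eps t \<omega>) powr \<alpha>) < 1"
    and mom_g: "\<And>t. integrable M (\<lambda>\<omega>. g (eps t \<omega>) powr \<alpha>)"
    and sigma_rv: "\<And>t. \<sigma> t \<in> borel_measurable M"
    and sigma_pos: "\<And>t. prob_space.prob M {\<omega> \<in> space M. \<sigma> t \<omega> > 0} = 1"
    and sigma_stat: "stationary_proc M \<sigma>"
    and sigma_erg: "ergodic_proc M \<sigma>"
    and sigma_eq: "\<And>t. AE \<omega> in M.
          (\<lambda>k. (\<Prod>j<Suc k. c (eps (t - 1 - int j) \<omega>)) *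
                 (g (eps (t - 1 - int (Suc k)) \<omega>) + u (x (t - 1 - int (Suc k)) \<omega>)))
          sums (\<bar>\<sigma> t \<omega>\<bar> powr \<delta> - g (eps (t - 1) \<omega>) - u (x (t - 1) \<omega>))"
    and R_def: "\<And>t \<omega>. R t \<omega> = \<sigma> t \<omega> * eps t \<omega>"
    and sigt_rec: "\<And>n \<omega>. \<bar>\<sigma>t (Suc n) \<omega>\<bar> powr \<delta> =
          g (eps (int n) \<omega>) + u (x (int n) \<omega>) + c (eps (int n) \<omega>) * \<bar>\<sigma>t n \<omega>\<bar> powr \<delta>"
    and sigt0_rv: "\<sigma>t 0 \<in> borel_measurable M"
    and sigt0_indep: "prob_space.indep_set M
          (sets (vimage_algebra (space M) (\<sigma>t 0) borel))
          (sets (vimage_algebra (space M) (\<lambda>\<omega> t. eps t \<omega>) (PiM UNIV (\<lambda>_. borel))))"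
    and sigt0_mom: "integrable M (\<lambda>\<omega>. \<bar>\<sigma>t 0 \<omega>\<bar> powr (\<delta> * \<alpha>))"
    and Rt_def: "\<And>t \<omega>. Rt t \<omega> = \<sigma>t t \<omega> * eps (int t) \<omega>"
  shows "\<exists>\<rho>::real. 0 < \<rho> \<and> \<rho> < 1 \<and>
    (let \<xi> = (\<lambda>t \<omega>. \<bar>\<sigma>t t \<omega>\<bar> powr \<delta> - \<bar>\<sigma> (int t) \<omega>\<bar> powr \<delta>);
         \<psi> = (\<lambda>t \<omega>. \<bar>Rt t \<omega>\<bar> powr \<delta> - \<bar>R (int t) \<omega>\<bar> powr \<delta>)
     in (\<forall>t. integrable M (\<lambda>\<omega>. \<bar>\<xi> t \<omega>\<bar> powr \<alpha>)) \<and>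
        (\<lambda>t. prob_space.expectation M (\<lambda>\<omega>. \<bar>\<xi> t \<omega>\<bar> powr \<alpha>)) \<in> O(\<lambda>t. \<rho> ^ t) \<and>
        (\<forall>t. integrable M (\<lambda>\<omega>. \<bar>\<psi> t \<omega>\<bar> powr \<alpha>)) \<and>
        (\<lambda>t. prob_space.expectation M (\<lambda>\<omega>. \<bar>\<psi> t \<omega>\<bar> powr \<alpha>)) \<in> O(\<lambda>t. \<rho> ^ t))"
proof -
  interpret prob_space M by (rule P)
  interpret power_recursion M eps x g u c \<delta> \<alpha> \<sigma> \<sigma>t
    by unfold_locales (fact assms)+
  define \<rho> where "\<rho> = max rate (1 / 2)"
  have \<rho>: "0 < \<rho>" "\<rho> < 1" "rate \<le> \<rho>"
    using rate_less_1 by (auto simp: \<rho>_def)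
  have unit_weight: "(\<lambda>_. 1) \<in> borel_measurable borel" "\<And>y. 0 \<le> (1 :: real)" "integrable M (\<lambda>_. 1 :: real)"
    by auto
  have eps_weight: "(\<lambda>y. \<bar>y\<bar> powr (\<delta> * \<alpha>)) \<in> borel_measurable borel" "\<And>y. 0 \<le> \<bar>y\<bar> powr (\<delta> * \<alpha>)"
    "integrable M (\<lambda>\<omega>. \<bar>eps 0 \<omega>\<bar> powr (\<delta> * \<alpha>))"
    using mom_eps by auto
  have \<psi>_eq: "\<bar>\<bar>Rt t \<omega>\<bar> powr \<delta> - \<bar>R (int t) \<omega>\<bar> powr \<delta>\<bar> powr \<alpha> = \<bar>eps (int t) \<omega>\<bar> powr (\<delta> * \<alpha>) * \<bar>\<xi> t \<omega>\<bar> powr \<alpha>"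
    for t \<omega>
  proof -
    have "\<bar>Rt t \<omega>\<bar> powr \<delta> - \<bar>R (int t) \<omega>\<bar> powr \<delta> = \<bar>eps (int t) \<omega>\<bar> powr \<delta> * \<xi> t \<omega>"
      by (simp add: Rt_def R_def \<xi>_def abs_mult powr_mult algebra_simps)
    then show ?thesis by (simp add: abs_mult powr_mult powr_powr)
  qed
  show ?thesis
    unfolding Let_def \<psi>_eq
    using \<rho> integrable_weighted_\<xi>[OF unit_weight] expectation_weighted_\<xi>_bigo[OF unit_weight \<rho>(3)]
      integrable_weighted_\<xi>[OF eps_weight] expectation_weighted_\<xi>_bigo[OF eps_weight \<rho>(3)]
    by (auto simp: \<xi>_def)
qed

end
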